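(* Let $k\geq 2$ be an integer and let $A=[\bm{a}_1,\dots,\bm{a}_n]\in\mathbb{R}^{m\times n}$ have columns with $\|\bm{a}_i\|_2=1$ for all $i$. Suppose the mutual coherence $\mu=\max_{1\leq i<j\leq n}|\langle \bm{a}_i,\bm{a}_j\rangle|$ satisfies $$\mu<\frac{1}{2k-1}.$$ Let $\bm{x}\in\mathbb{R}^n$ be arbitrary (not necessarily sparse), let $\epsilon\geq 0$, let $\bm{z}\in\mathbb{R}^m$ with $\|\bm{z}\|_2\leq\epsilon$, and set $\bm{b}=A\bm{x}+\bm{z}$. Let $\lambda>0$ and let $\bm{x}^{\sharp}$ be an optimal solution of $$\min_{\bm{y}\in\mathbb{R}^n}\ \|\bm{y}\|_1+\frac{1}{2\lambda}\|\bm{b}-A\bm{y}\|_2^2 .$$ Define $$\alpha_1=\frac{\sqrt{1+(k-1)\mu}}{1-(k-1)\mu},\qquad \alpha_2=\frac{\sqrt{k}\,\mu}{1-(k-1)\mu},$$ $$f_k(t)=kt^2+3\sqrt{k}\,t+3,\qquad g_k(t)=2kt^2+4\sqrt{k}\,t+1 .$$ Then $$\|A(\bm{x}^{\sharp}-\bm{x})\|_2\leq \frac{2\lambda}{\sqrt{k}\alpha_1\lambda+\epsilon}\,\|\bm{x}-\bm{x}_{[k]}\|_1+2(\sqrt{k}\alpha_1\lambda+\epsilon),$$ and $$\|\bm{x}^{\sharp}-\bm{x}\|_2\leq \frac{2\sqrt{k}\alpha_1 f_k(\alpha_2)\lambda+2g_k(\alpha_2)\epsilon}{\sqrt{k}(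1-\sqrt{k}\alpha_2)(\sqrt{k}\alpha_1\lambda+\epsilon)}\,\|\bm{x}-\bm{x}_{[k]}\|_1+\frac{\big(\sqrt{k}\alpha_1(5+2\sqrt{k}\alpha_2)\lambda+g_k(\alpha_2)\epsilon\big)(\sqrt{k}\alpha_1\lambda+\epsilon)}{\sqrt{k}(1-\sqrt{k}\alpha_2)\lambda}.$$
   Context: For $\bm{x}\in\mathbb{R}^n$, $\bm{x}_{[k]}$ denotes a best $k$-term approximation of $\bm{x}$, i.e. $\bm{x}_{[k]}\in\arg\min_{\|\bm{y}\|_0\leq k}\|\bm{y}-\bm{x}\|_2$, where $\|\bm{y}\|_0$ is the number of nonzero entries of $\bm{y}$. *)

theory Defs
  imports "HOL-Analysis.Analysis"
begin

definition l0 :: "real ^ 'n \<Rightarrow> nat" where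
  "l0 y = card {i. y $ i \<noteq> 0}"

definition l1 :: "real ^ 'n \<Rightarrow> real" where
  "l1 y = (\<Sum>i\<in>UNIV. \<bar>y $ i\<bar>)"

definition best_k_term :: "nat \<Rightarrow> real ^ 'n \<Rightarrow> real ^ 'n \<Rightarrow> bool" where
  "best_k_term k x xk \<longleftrightarrow> l0 xk \<le> k \<and>
     (\<forall>y. l0 y \<le> k \<longrightarrow> norm (xk - x) \<le> norm (y - x))"

text \<open>Mutual coherence: maximum of |<a_i,a_j>| over distinct columns
  (0 if there are fewer than two columns).\<close>
definition mutual_coherence :: "real ^ 'n ^ 'm \<Rightarrow> real" where
  "mutual_coherence A =
     Max (insert 0 {\<bar>column i A \<bullet> column j A\<bar> | i j. i \<noteq> j})"

definition lasso_obj :: "real \<Rightarrow> real ^ 'n ^ 'm \<Rightarrow> real ^ 'm \<Rightarrow> real ^ 'n \<Rightarrow> real" where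
  "lasso_obj lam A b y = l1 y + (1 / (2 * lam)) * (norm (b - A *v y))\<^sup>2"

end

theory Submission
  imports Defs
begin

(* Write h = xs - x, let T be the support of xk, and h_T, h_T' the restrictions of h to T and to its
   complement. Optimality of xs against x and the cone estimate for the l1 norm give
     |Ah|^2 <= 2 lam (sqrt k |h_T| - |h_T'|_1 + 2 |x - xk|_1) + 2 eps |Ah|.
   Coherence below 1/(2k-1) makes A nearly isometric on k-sparse vectors, whence
   |h_T| <= alpha1 |Ah| + alpha2 |h_T'|_1 and |h| <= |Ah| + sqrt mu |h|_1. With the first bound the
   inequality becomes quadratic in |Ah|; solving it yields the prediction bound and a bound on
   |h_T'|_1, which the second bound turns into the estimation bound. *)

lemma finite_abs_inner_columns:
  "finite {\<bar>column i A \<bullet> column j A\<bar> | i j. i \<noteq> j}"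
  by (rule finite_subset[of _ "(\<lambda>(i, j). \<bar>column i A \<bullet> column j A\<bar>) ` UNIV"]) auto

lemma mutual_coherence_nonneg: "0 \<le> mutual_coherence A"
  unfolding mutual_coherence_def using finite_abs_inner_columns by (intro Max_ge) auto

lemma abs_inner_columns_le_mutual_coherence:
  "i \<noteq> j \<Longrightarrow> \<bar>column i A \<bullet> column j A\<bar> \<le> mutual_coherence A"
  unfolding mutual_coherence_def using finite_abs_inner_columns by (intro Max_ge) auto

lemma inner_matrix_vector_mult:
  fixes A :: "real ^ 'n ^ 'm"
  shows "(A *v v) \<bullet> (A *v w) = (\<Sum>i\<in>UNIV. \<Sum>j\<in>UNIV. v$i * w$j * (column i A \<bullet> column j A))"
proof -
  have "(A *v v) \<bullet> (A *v w) = (\<Sum>r\<in>UNIV. \<Sum>i\<in>UNIV. \<Sum>j\<in>UNIV. v$i * w$j * (A$r$i * A$r$j))"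
    by (simp add: inner_vec_def matrix_vector_mult_def sum_product algebra_simps)
  also have "\<dots> = (\<Sum>i\<in>UNIV. \<Sum>j\<in>UNIV. \<Sum>r\<in>UNIV. v$i * w$j * (A$r$i * A$r$j))"
    by (subst sum.swap) (rule sum.cong[OF refl], rule sum.swap)
  finally show ?thesis
    by (simp add: inner_vec_def column_def sum_distrib_left)
qed

lemma abs_bilinear_minus_diagonal_le:
  fixes G :: "'n::finite \<Rightarrow> 'n \<Rightarrow> real"
  assumes diag: "\<And>i. G i i = 1" and off: "\<And>i j. i \<noteq> j \<Longrightarrow> \<bar>G i j\<bar> \<le> \<mu>"
  shows "\<bar>(\<Sum>i\<in>UNIV. \<Sum>j\<in>UNIV. v i * w j * G i j) - (\<Sum>i\<in>UNIV. v i * w i)\<bar>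
     \<le> \<mu> * ((\<Sum>i\<in>UNIV. \<bar>v i\<bar>) * (\<Sum>j\<in>UNIV. \<bar>w j\<bar>) - (\<Sum>i\<in>UNIV. \<bar>v i\<bar> * \<bar>w i\<bar>))"
proof -
  define E where "E i j = G i j - (if i = j then 1 else 0)" for i j
  have "(\<Sum>i\<in>UNIV. \<Sum>j\<in>UNIV. v i * w j * G i j) - (\<Sum>i\<in>UNIV. v i * w i)
      = (\<Sum>i\<in>UNIV. \<Sum>j\<in>UNIV. v i * w j * E i j)"
    by (simp add: E_def algebra_simps sum_subtractf if_distrib[where f="\<lambda>x. _ * x"] cong: if_cong)
  also have "\<bar>\<dots>\<bar> \<le> (\<Sum>i\<in>UNIV. \<Sum>j\<in>UNIV. \<bar>v i * w j * E i j\<bar>)"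
    by (rule order_trans[OF sum_abs sum_mono]) (rule sum_abs)
  also have "\<dots> \<le> (\<Sum>i\<in>UNIV. \<Sum>j\<in>UNIV. \<mu> * (\<bar>v i\<bar> * \<bar>w j\<bar> - (if i = j then \<bar>v i\<bar> * \<bar>w j\<bar> else 0)))"
  proof (intro sum_mono)
    fix i j
    show "\<bar>v i * w j * E i j\<bar> \<le> \<mu> * (\<bar>v i\<bar> * \<bar>w j\<bar> - (if i = j then \<bar>v i\<bar> * \<bar>w j\<bar> else 0))"
    proof (cases "i = j")
      case False
      have "\<bar>v i * w j * E i j\<bar> = (\<bar>v i\<bar> * \<bar>w j\<bar>) * \<bar>G i j\<bar>"
        using False by (simp add: E_def abs_mult)
      also have "\<dots> \<le> (\<bar>v i\<bar> * \<bar>w j\<bar>) * \<mu>"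
        by (rule mult_left_mono[OF off[OF False]]) simp
      finally show ?thesis using False by (simp add: mult.commute)
    qed (simp add: E_def diag)
  qed
  also have "\<dots> = \<mu> * ((\<Sum>i\<in>UNIV. \<bar>v i\<bar>) * (\<Sum>j\<in>UNIV. \<bar>w j\<bar>) - (\<Sum>i\<in>UNIV. \<bar>v i\<bar> * \<bar>w i\<bar>))"
    by (simp add: sum_distrib_left[symmetric] sum_subtractf sum_product right_diff_distrib)
  finally show ?thesis .
qed

lemma abs_inner_matrix_vector_minus_inner_le:
  fixes A :: "real ^ 'n ^ 'm"
  assumes unit: "\<And>i. norm (column i A) = 1"
    and coh: "\<And>i j. i \<noteq> j \<Longrightarrow> \<bar>column i A \<bullet> column j A\<bar> \<le> \<mu>"
  shows "\<bar>(A *v v) \<bullet> (A *v w) - v \<bullet> w\<bar> \<le> \<mu> * (l1 v * l1 w - (\<Sum>i\<in>UNIV. \<bar>v$i\<bar> * \<bar>w$i\<bar>))"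
proof -
  have "column i A \<bullet> column i A = 1" for i
    using unit by (metis power2_norm_eq_inner one_power2)
  from abs_bilinear_minus_diagonal_le[where G="\<lambda>i j. column i A \<bullet> column j A", OF this coh]
  show ?thesis
    unfolding inner_matrix_vector_mult l1_def by (simp add: inner_vec_def)
qed

lemma sum_abs_mult_self_eq_norm_sq: "(\<Sum>i\<in>UNIV. \<bar>v$i\<bar> * \<bar>v$i\<bar>) = (norm (v :: real ^ 'n))\<^sup>2"
  by (simp add: power2_norm_eq_inner inner_vec_def abs_mult_self_eq)

lemma l1_le_sqrt_l0_mul_norm: "l1 v \<le> sqrt (real (l0 v)) * norm v"
proof -
  define a where "a = (\<chi> i. \<bar>v$i\<bar>)"
  define e where "e = (\<chi> i. if v$i \<noteq> 0 then (1::real) else 0)"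
  have "l1 v = a \<bullet> e"
    unfolding a_def e_def inner_vec_def l1_def by (intro sum.cong) auto
  also have "\<dots> \<le> norm a * norm e" by (rule norm_cauchy_schwarz)
  also have "norm a = norm v"
    unfolding a_def norm_eq_sqrt_inner inner_vec_def by (simp add: abs_mult_self_eq)
  also have "norm e = sqrt (real (l0 v))"
    unfolding e_def norm_eq_sqrt_inner inner_vec_def l0_def
    by (simp add: if_distrib[where f="\<lambda>x. x * _"] sum.If_cases cong: if_cong)
  finally show ?thesis by (simp add: mult.commute)
qed

lemma l1_nonneg: "0 \<le> l1 v"
  unfolding l1_def by (intro sum_nonneg) auto

definition vec_restrict :: "'n set \<Rightarrow> real ^ 'n \<Rightarrow> real ^ 'n" where
  "vec_restrict T v = (\<chi> i. if i \<in> T then v$i else 0)"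

lemma vec_restrict_nth [simp]: "vec_restrict T v $ i = (if i \<in> T then v$i else 0)"
  by (simp add: vec_restrict_def)

lemma vec_restrict_add_compl: "vec_restrict T v + vec_restrict (- T) v = v"
  by (simp add: vec_eq_iff)

lemma l0_vec_restrict_le: "l0 (vec_restrict T v) \<le> card T"
  unfolding l0_def by (intro card_mono) auto

lemma l1_vec_restrict_add_compl: "l1 (vec_restrict T v) + l1 (vec_restrict (- T) v) = l1 v"
  unfolding l1_def sum.distrib[symmetric] by (intro sum.cong) auto

lemma l1_le_sqrt_mul_norm: "l0 v \<le> k \<Longrightarrow> l1 v \<le> sqrt (real k) * norm v"
  using l1_le_sqrt_l0_mul_norm[of v]
  by (meson mult_right_mono norm_ge_zero of_nat_le_iff order_trans real_sqrt_le_mono)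

lemma abs_norm_sq_matrix_vector_minus_norm_sq_le:
  fixes A :: "real ^ 'n ^ 'm"
  assumes unit: "\<And>i. norm (column i A) = 1"
    and coh: "\<And>i j. i \<noteq> j \<Longrightarrow> \<bar>column i A \<bullet> column j A\<bar> \<le> \<mu>"
  shows "\<bar>(norm (A *v v))\<^sup>2 - (norm v)\<^sup>2\<bar> \<le> \<mu> * ((l1 v)\<^sup>2 - (norm v)\<^sup>2)"
proof -
  have "(A *v v) \<bullet> (A *v v) = (norm (A *v v))\<^sup>2" "v \<bullet> v = (norm v)\<^sup>2"
    by (simp_all add: power2_norm_eq_inner)
  moreover have "\<bar>(A *v v) \<bullet> (A *v v) - v \<bullet> v\<bar>
      \<le> \<mu> * (l1 v * l1 v - (\<Sum>i\<in>UNIV. \<bar>v$i\<bar> * \<bar>v$i\<bar>))"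
    using unit coh by (rule abs_inner_matrix_vector_minus_inner_le)
  ultimately show ?thesis
    by (simp only: sum_abs_mult_self_eq_norm_sq power2_eq_square[of "l1 v", symmetric])
qed

lemma coherence_restricted_isometry:
  fixes A :: "real ^ 'n ^ 'm"
  assumes unit: "\<And>i. norm (column i A) = 1"
    and coh: "\<And>i j. i \<noteq> j \<Longrightarrow> \<bar>column i A \<bullet> column j A\<bar> \<le> \<mu>"
    and "0 \<le> \<mu>" and "l0 v \<le> k"
  shows "\<bar>(norm (A *v v))\<^sup>2 - (norm v)\<^sup>2\<bar> \<le> (real k - 1) * \<mu> * (norm v)\<^sup>2"
proof -
  have "(l1 v)\<^sup>2 \<le> (sqrt (real k) * norm v)\<^sup>2"
    using l1_le_sqrt_mul_norm[OF \<open>l0 v \<le> k\<close>] l1_nonneg[of v] by (intro power_mono)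
  hence "\<mu> * ((l1 v)\<^sup>2 - (norm v)\<^sup>2) \<le> \<mu> * (real k * (norm v)\<^sup>2 - (norm v)\<^sup>2)"
    using \<open>0 \<le> \<mu>\<close> by (intro mult_left_mono) (auto simp: power_mult_distrib)
  moreover have "\<bar>(norm (A *v v))\<^sup>2 - (norm v)\<^sup>2\<bar> \<le> \<mu> * ((l1 v)\<^sup>2 - (norm v)\<^sup>2)"
    using unit coh by (rule abs_norm_sq_matrix_vector_minus_norm_sq_le)
  ultimately show ?thesis by (simp add: algebra_simps)
qed

lemma coherence_norm_matrix_vector_le:
  fixes A :: "real ^ 'n ^ 'm"
  assumes unit: "\<And>i. norm (column i A) = 1"
    and coh: "\<And>i j. i \<noteq> j \<Longrightarrow> \<bar>column i A \<bullet> column j A\<bar> \<le> \<mu>"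
    and "0 \<le> \<mu>" and "l0 v \<le> k"
  shows "norm (A *v v) \<le> sqrt (1 + (real k - 1) * \<mu>) * norm v"
proof -
  have "(norm (A *v v))\<^sup>2 \<le> (1 + (real k - 1) * \<mu>) * (norm v)\<^sup>2"
    using coherence_restricted_isometry[OF unit coh assms(3,4)]
    unfolding abs_le_iff distrib_right by linarith
  hence "norm (A *v v) \<le> sqrt ((1 + (real k - 1) * \<mu>) * (norm v)\<^sup>2)"
    by (rule real_le_rsqrt)
  thus ?thesis by (simp add: real_sqrt_mult)
qed

lemma coherence_abs_inner_vec_restrict_le:
  fixes A :: "real ^ 'n ^ 'm"
  assumes unit: "\<And>i. norm (column i A) = 1"
    and coh: "\<And>i j. i \<noteq> j \<Longrightarrow> \<bar>column i A \<bullet> column j A\<bar> \<le> \<mu>"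
    and "0 \<le> \<mu>" and "card T \<le> k"
  shows "\<bar>(A *v vec_restrict T h) \<bullet> (A *v vec_restrict (- T) h)\<bar>
    \<le> sqrt (real k) * \<mu> * norm (vec_restrict T h) * l1 (vec_restrict (- T) h)"
proof -
  define v where "v = vec_restrict T h"
  define w where "w = vec_restrict (- T) h"
  have "\<bar>(A *v v) \<bullet> (A *v w) - v \<bullet> w\<bar>
      \<le> \<mu> * (l1 v * l1 w - (\<Sum>i\<in>UNIV. \<bar>v$i\<bar> * \<bar>w$i\<bar>))"
    using unit coh by (rule abs_inner_matrix_vector_minus_inner_le)
  moreover have "(\<Sum>i\<in>UNIV. \<bar>v$i\<bar> * \<bar>w$i\<bar>) = 0" "v \<bullet> w = 0"
    by (auto simp: v_def w_def inner_vec_def intro!: sum.neutral)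
  ultimately have "\<bar>(A *v v) \<bullet> (A *v w)\<bar> \<le> \<mu> * (l1 v * l1 w)"
    by simp
  also have "\<dots> \<le> \<mu> * (sqrt (real k) * norm v * l1 w)"
    using l0_vec_restrict_le[of T h] \<open>card T \<le> k\<close> \<open>0 \<le> \<mu>\<close> l1_nonneg[of w]
    unfolding v_def by (intro mult_left_mono mult_right_mono l1_le_sqrt_mul_norm) auto
  finally show ?thesis unfolding v_def w_def by (simp add: algebra_simps)
qed

lemma coherence_norm_vec_restrict_le:
  fixes A :: "real ^ 'n ^ 'm"
  assumes unit: "\<And>i. norm (column i A) = 1"
    and coh: "\<And>i j. i \<noteq> j \<Longrightarrow> \<bar>column i A \<bullet> column j A\<bar> \<le> \<mu>"
    and "0 \<le> \<mu>" and "1 \<le> k" and "card T \<le> k" and "(real k - 1) * \<mu> < 1"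
  shows "norm (vec_restrict T h)
    \<le> sqrt (1 + (real k - 1) * \<mu>) / (1 - (real k - 1) * \<mu>) * norm (A *v h)
      + sqrt (real k) * \<mu> / (1 - (real k - 1) * \<mu>) * l1 (vec_restrict (- T) h)"
proof -
  define v where "v = vec_restrict T h"
  define w where "w = vec_restrict (- T) h"
  define p where "p = norm v"
  define c where "c = 1 - (real k - 1) * \<mu>"
  define R where "R = sqrt (1 + (real k - 1) * \<mu>) * norm (A *v h) + sqrt (real k) * \<mu> * l1 w"
  have "0 < c" unfolding c_def using assms(6) by simp
  have "0 \<le> R" unfolding R_def using \<open>0 \<le> \<mu>\<close> \<open>1 \<le> k\<close> l1_nonneg[of w] by simp
  have l0v: "l0 v \<le> k"
    unfolding v_def using l0_vec_restrict_le[of T h] \<open>card T \<le> k\<close> by linarith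
  have "c * p\<^sup>2 \<le> (norm (A *v v))\<^sup>2"
    using coherence_restricted_isometry[OF unit coh \<open>0 \<le> \<mu>\<close> l0v]
    unfolding c_def p_def abs_le_iff left_diff_distrib by linarith
  also have "\<dots> = (A *v v) \<bullet> (A *v h) - (A *v v) \<bullet> (A *v w)"
  proof -
    have "A *v h = A *v v + A *v w"
      unfolding v_def w_def by (metis vec_restrict_add_compl matrix_vector_right_distrib)
    thus ?thesis by (simp add: inner_add_right power2_norm_eq_inner)
  qed
  also have "\<dots> \<le> norm (A *v v) * norm (A *v h) + \<bar>(A *v v) \<bullet> (A *v w)\<bar>"
    using norm_cauchy_schwarz[of "A *v v" "A *v h"] by linarith
  also have "\<dots> \<le> p * R"
    using mult_right_mono[OF coherence_norm_matrix_vector_le[OF unit coh \<open>0 \<le> \<mu>\<close> l0v]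
        norm_ge_zero[of "A *v h"]]
      coherence_abs_inner_vec_restrict_le[OF unit coh \<open>0 \<le> \<mu>\<close> \<open>card T \<le> k\<close>, of h]
    unfolding p_def R_def v_def w_def by (simp add: algebra_simps)
  finally have "p * (c * p) \<le> p * R" by (simp add: power2_eq_square algebra_simps)
  hence "c * p \<le> R"
    using \<open>0 \<le> R\<close> by (cases "p = 0") (auto simp: p_def mult_le_cancel_left_pos)
  hence "p \<le> R / c" using \<open>0 < c\<close> by (simp add: field_simps)
  thus ?thesis unfolding p_def R_def c_def v_def w_def by (simp add: add_divide_distrib)
qed

lemma coherence_norm_le:
  fixes A :: "real ^ 'n ^ 'm"
  assumes unit: "\<And>i. norm (column i A) = 1"
    and coh: "\<And>i j. i \<noteq> j \<Longrightarrow> \<bar>column i A \<bullet> column j A\<bar> \<le> \<mu>"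
    and "0 \<le> \<mu>"
  shows "norm h \<le> norm (A *v h) + sqrt \<mu> * l1 h"
proof -
  have "\<bar>(norm (A *v h))\<^sup>2 - (norm h)\<^sup>2\<bar> \<le> \<mu> * ((l1 h)\<^sup>2 - (norm h)\<^sup>2)"
    using unit coh by (rule abs_norm_sq_matrix_vector_minus_norm_sq_le)
  hence "(norm h)\<^sup>2 \<le> (norm (A *v h))\<^sup>2 + \<mu> * (l1 h)\<^sup>2"
    using mult_nonneg_nonneg[OF \<open>0 \<le> \<mu>\<close> zero_le_power2[of "norm h"]]
    unfolding abs_le_iff right_diff_distrib by linarith
  also have "\<dots> \<le> (norm (A *v h) + sqrt \<mu> * l1 h)\<^sup>2"
    using \<open>0 \<le> \<mu>\<close> l1_nonneg[of h] by (simp add: power2_sum power_mult_distrib)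
  finally show ?thesis
    by (rule power2_le_imp_le) (use \<open>0 \<le> \<mu>\<close> l1_nonneg[of h] in simp)
qed

text \<open>Replacing \<open>xk\<close> on its support by \<open>x\<close> keeps the sparsity and does not increase the error.\<close>
lemma best_k_term_nth_eq:
  assumes best: "best_k_term k x xk" and "xk $ i \<noteq> 0"
  shows "xk $ i = x $ i"
proof -
  define T where "T = {i. xk $ i \<noteq> 0}"
  define y where "y = vec_restrict T x"
  have "l0 y \<le> k"
    using l0_vec_restrict_le[of T x] best unfolding y_def T_def best_k_term_def l0_def by simp
  hence "norm (xk - x) \<le> norm (y - x)" using best unfolding best_k_term_def by blast
  hence "(\<Sum>j\<in>UNIV. ((xk - x)$j)\<^sup>2) \<le> (\<Sum>j\<in>UNIV. ((y - x)$j)\<^sup>2)"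
    by (simp add: norm_le inner_vec_def power2_eq_square)
  also have "\<dots> \<le> (\<Sum>j\<in>UNIV. ((xk - x)$j)\<^sup>2 - (if j \<in> T then ((xk - x)$j)\<^sup>2 else 0))"
    by (intro sum_mono) (simp add: y_def T_def)
  finally have "(\<Sum>j\<in>UNIV. if j \<in> T then ((xk - x)$j)\<^sup>2 else 0) \<le> 0"
    by (simp add: sum_subtractf)
  moreover have "0 \<le> (\<Sum>j\<in>UNIV. if j \<in> T then ((xk - x)$j)\<^sup>2 else 0)"
    by (intro sum_nonneg) auto
  ultimately have "(\<Sum>j\<in>UNIV. if j \<in> T then ((xk - x)$j)\<^sup>2 else 0) = 0"
    by linarith
  hence "(if i \<in> T then ((xk - x)$i)\<^sup>2 else 0) = 0"
    by (subst (asm) sum_nonneg_eq_0_iff) auto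
  thus ?thesis using \<open>xk $ i \<noteq> 0\<close> by (simp add: T_def)
qed

lemma l1_diff_best_k_term:
  assumes "best_k_term k x xk"
  shows "l1 (x - xk) = l1 (vec_restrict (- {i. xk $ i \<noteq> 0}) x)"
  unfolding l1_def using best_k_term_nth_eq[OF assms] by (intro sum.cong) auto

lemma l1_diff_l1_add_le:
  "l1 x - l1 (x + h)
     \<le> l1 (vec_restrict T h) - l1 (vec_restrict (- T) h) + 2 * l1 (vec_restrict (- T) x)"
proof -
  have "l1 x - l1 (x + h) = (\<Sum>i\<in>UNIV. \<bar>x$i\<bar> - \<bar>x$i + h$i\<bar>)"
    unfolding l1_def by (simp add: sum_subtractf)
  also have "\<dots> \<le> (\<Sum>i\<in>UNIV. \<bar>vec_restrict T h $ i\<bar> - \<bar>vec_restrict (- T) h $ i\<bar>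
                               + 2 * \<bar>vec_restrict (- T) x $ i\<bar>)"
    by (intro sum_mono) (auto simp: abs_if)
  also have "\<dots> = l1 (vec_restrict T h) - l1 (vec_restrict (- T) h) + 2 * l1 (vec_restrict (- T) x)"
    unfolding l1_def by (simp add: sum.distrib sum_subtractf sum_distrib_left)
  finally show ?thesis .
qed

lemma lasso_basic_inequality:
  fixes A :: "real ^ 'n ^ 'm"
  assumes "b = A *v x + z" and "norm z \<le> \<epsilon>" and "lam > 0"
    and "lasso_obj lam A b xs \<le> lasso_obj lam A b x"
  shows "(norm (A *v (xs - x)))\<^sup>2 \<le> 2 * lam * (l1 x - l1 xs) + 2 * \<epsilon> * norm (A *v (xs - x))"
proof -
  define u where "u = A *v (xs - x)"
  have "b - A *v xs = z - u" "b - A *v x = z"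
    using assms(1) by (simp_all add: u_def matrix_vector_mult_diff_distrib)
  hence "l1 xs + (norm (z - u))\<^sup>2 / (2 * lam) \<le> l1 x + (norm z)\<^sup>2 / (2 * lam)"
    using assms(4) unfolding lasso_obj_def by simp
  hence "2 * lam * (l1 xs + (norm (z - u))\<^sup>2 / (2 * lam))
      \<le> 2 * lam * (l1 x + (norm z)\<^sup>2 / (2 * lam))"
    using \<open>lam > 0\<close> by (intro mult_left_mono) auto
  hence "2 * lam * l1 xs + (norm (z - u))\<^sup>2 \<le> 2 * lam * l1 x + (norm z)\<^sup>2"
    using \<open>lam > 0\<close> by (simp add: distrib_left)
  moreover have "(norm (z - u))\<^sup>2 = (norm z)\<^sup>2 - 2 * (z \<bullet> u) + (norm u)\<^sup>2"
    by (simp add: power2_norm_eq_inner inner_diff_left inner_diff_right inner_commute)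
  moreover have "z \<bullet> u \<le> \<epsilon> * norm u"
    using norm_cauchy_schwarz[of z u] mult_right_mono[OF assms(2) norm_ge_zero[of u]] by linarith
  ultimately show ?thesis unfolding u_def[symmetric] right_diff_distrib by linarith
qed

lemma le_of_square_le_linear:
  fixes u D c :: real
  assumes "0 < D" and "0 \<le> c" and "u\<^sup>2 \<le> 2 * D * u + c"
  shows "u \<le> c / (2 * D) + 2 * D"
proof (cases "u \<le> 2 * D")
  case False
  have "2 * D * (u - 2 * D) \<le> u * (u - 2 * D)"
    using False by (intro mult_right_mono) auto
  also have "\<dots> \<le> c" using assms(3) by (simp add: power2_eq_square algebra_simps)
  finally have "u - 2 * D \<le> c / (2 * D)" using \<open>0 < D\<close> by (simp add: field_simps)
  thus ?thesis by simp
next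
  case True
  moreover have "0 \<le> c / (2 * D)" using assms(1,2) by simp
  ultimately show ?thesis by linarith
qed

lemma lasso_residual_quadratic:
  fixes K a1 \<beta> lam eps s u p q :: real
  assumes "0 \<le> lam"
    and H1: "u\<^sup>2 \<le> 2 * lam * (K * p - q + 2 * s) + 2 * eps * u"
    and H2: "K * p \<le> K * a1 * u + \<beta> * q"
  shows "u\<^sup>2 \<le> 2 * (K * a1 * lam + eps) * u - 2 * lam * (1 - \<beta>) * q + 4 * lam * s"
proof -
  have "2 * lam * (K * p) \<le> 2 * lam * (K * a1 * u + \<beta> * q)"
    using H2 \<open>0 \<le> lam\<close> by (intro mult_left_mono) auto
  thus ?thesis using H1 by (simp add: algebra_simps)
qed

lemma lasso_prediction_bound:
  fixes lam D \<beta> s u q :: real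
  assumes "0 < lam" and "0 < D" and "0 \<le> s" and "\<beta> \<le> 1" and "0 \<le> q"
    and "u\<^sup>2 \<le> 2 * D * u - 2 * lam * (1 - \<beta>) * q + 4 * lam * s"
  shows "u \<le> 2 * lam / D * s + 2 * D"
proof -
  have "0 \<le> 2 * lam * (1 - \<beta>) * q" using assms by simp
  hence "u\<^sup>2 \<le> 2 * D * u + 4 * lam * s" using assms(6) by linarith
  from le_of_square_le_linear[OF \<open>0 < D\<close> _ this] show ?thesis
    using assms by (simp add: field_simps)
qed

lemma lasso_off_support_bound:
  fixes lam \<beta> D s u q :: real
  assumes "0 < lam" and "\<beta> < 1"
    and "u\<^sup>2 \<le> 2 * D * u - 2 * lam * (1 - \<beta>) * q + 4 * lam * s"
  shows "q \<le> (D\<^sup>2 + 4 * lam * s) / (2 * lam * (1 - \<beta>))"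
proof -
  have "2 * D * u - u\<^sup>2 \<le> D\<^sup>2"
    using sum_power2_ge_zero[of "D - u" 0] by (simp add: power2_eq_square algebra_simps)
  hence "2 * lam * (1 - \<beta>) * q \<le> D\<^sup>2 + 4 * lam * s" using assms(3) by linarith
  thus ?thesis using assms(1,2) by (simp add: field_simps)
qed

lemma lasso_error_l1_coefficient_le:
  fixes K a1 \<beta> lam eps :: real
  assumes "0 < K" and "1 \<le> a1" and "0 \<le> \<beta>" and "\<beta> < 1" and "0 < lam" and "0 \<le> eps"
  defines "D \<equiv> K * a1 * lam + eps"
  shows "2 * (1 + a1) * lam / D + 2 * (1 + \<beta>) / (K * (1 - \<beta>))
    \<le> (2 * K * a1 * (\<beta>\<^sup>2 + 3 * \<beta> + 3) * lam + 2 * (2 * \<beta>\<^sup>2 + 4 * \<beta> + 1) * eps) / (K * (1 - \<beta>) * D)"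
proof -
  have "0 < D" unfolding D_def using assms by (simp add: add_pos_nonneg)
  have "(1 + a1) * (1 - \<beta>) \<le> (2 * a1) * (1 - \<beta>)"
    using assms by (intro mult_right_mono) auto
  moreover have "a1 * (3 - \<beta>) \<le> a1 * (\<beta>\<^sup>2 + 3 * \<beta> + 3)"
    using assms by (intro mult_left_mono) (auto simp: power2_eq_square)
  ultimately have "(1 + a1) * (1 - \<beta>) + (1 + \<beta>) * a1 \<le> a1 * (\<beta>\<^sup>2 + 3 * \<beta> + 3)"
    by (simp add: algebra_simps)
  hence "K * lam * ((1 + a1) * (1 - \<beta>) + (1 + \<beta>) * a1) \<le> K * lam * (a1 * (\<beta>\<^sup>2 + 3 * \<beta> + 3))"
    using assms by (intro mult_left_mono) auto
  moreover have "(1 + \<beta>) * eps \<le> (2 * \<beta>\<^sup>2 + 4 * \<beta> + 1) * eps"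
    using assms by (intro mult_right_mono) (auto simp: power2_eq_square)
  ultimately have "2 * ((1 + a1) * lam * K * (1 - \<beta>) + (1 + \<beta>) * D)
      \<le> 2 * K * a1 * (\<beta>\<^sup>2 + 3 * \<beta> + 3) * lam + 2 * (2 * \<beta>\<^sup>2 + 4 * \<beta> + 1) * eps"
    unfolding D_def by (simp add: algebra_simps)
  hence "2 * ((1 + a1) * lam * K * (1 - \<beta>) + (1 + \<beta>) * D) / (K * (1 - \<beta>) * D)
      \<le> (2 * K * a1 * (\<beta>\<^sup>2 + 3 * \<beta> + 3) * lam + 2 * (2 * \<beta>\<^sup>2 + 4 * \<beta> + 1) * eps) / (K * (1 - \<beta>) * D)"
    using \<open>0 < D\<close> assms by (intro divide_right_mono) auto
  moreover have "2 * (1 + a1) * lam / D + 2 * (1 + \<beta>) / (K * (1 - \<beta>))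
      = 2 * ((1 + a1) * lam * K * (1 - \<beta>) + (1 + \<beta>) * D) / (K * (1 - \<beta>) * D)"
    using \<open>0 < D\<close> assms by (simp add: field_simps)
  ultimately show ?thesis by simp
qed

lemma lasso_error_constant_term_le:
  fixes K a1 \<beta> lam eps :: real
  assumes "0 < K" and "1 \<le> a1" and "0 \<le> \<beta>" and "\<beta> < 1" and "0 < lam" and "0 \<le> eps"
  defines "D \<equiv> K * a1 * lam + eps"
  shows "2 * (1 + a1) * D + (1 + \<beta>) * D\<^sup>2 / (2 * K * lam * (1 - \<beta>))
    \<le> (K * a1 * (5 + 2 * \<beta>) * lam + (2 * \<beta>\<^sup>2 + 4 * \<beta> + 1) * eps) * D / (K * (1 - \<beta>) * lam)"
proof -
  have "0 < D" unfolding D_def using assms by (simp add: add_pos_nonneg)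
  have "4 * (1 + a1) * (1 - \<beta>) \<le> 4 * (2 * a1) * 1"
    using assms by (intro mult_mono) auto
  moreover have "(1 + \<beta>) * a1 \<le> (2 + 4 * \<beta>) * a1"
    using assms by (intro mult_right_mono) auto
  ultimately have "4 * (1 + a1) * (1 - \<beta>) + (1 + \<beta>) * a1 \<le> 2 * a1 * (5 + 2 * \<beta>)"
    by (simp add: algebra_simps)
  hence "K * lam * (4 * (1 + a1) * (1 - \<beta>) + (1 + \<beta>) * a1) \<le> K * lam * (2 * a1 * (5 + 2 * \<beta>))"
    using assms by (intro mult_left_mono) auto
  moreover have "(1 + \<beta>) * eps \<le> 2 * (2 * \<beta>\<^sup>2 + 4 * \<beta> + 1) * eps"
    using assms by (intro mult_right_mono) (auto simp: power2_eq_square)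
  ultimately have "4 * (1 + a1) * K * lam * (1 - \<beta>) + (1 + \<beta>) * D
      \<le> 2 * (K * a1 * (5 + 2 * \<beta>) * lam + (2 * \<beta>\<^sup>2 + 4 * \<beta> + 1) * eps)"
    unfolding D_def by (simp add: algebra_simps)
  hence "D * (4 * (1 + a1) * K * lam * (1 - \<beta>) + (1 + \<beta>) * D) / (2 * K * lam * (1 - \<beta>))
      \<le> D * (2 * (K * a1 * (5 + 2 * \<beta>) * lam + (2 * \<beta>\<^sup>2 + 4 * \<beta> + 1) * eps)) / (2 * K * lam * (1 - \<beta>))"
    using \<open>0 < D\<close> assms by (intro divide_right_mono mult_left_mono) auto
  moreover have "2 * (1 + a1) * D + (1 + \<beta>) * D\<^sup>2 / (2 * K * lam * (1 - \<beta>))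
      = D * (4 * (1 + a1) * K * lam * (1 - \<beta>) + (1 + \<beta>) * D) / (2 * K * lam * (1 - \<beta>))"
    using \<open>0 < D\<close> assms by (simp add: field_simps power2_eq_square)
  moreover have "D * (2 * (K * a1 * (5 + 2 * \<beta>) * lam + (2 * \<beta>\<^sup>2 + 4 * \<beta> + 1) * eps)) / (2 * K * lam * (1 - \<beta>))
      = (K * a1 * (5 + 2 * \<beta>) * lam + (2 * \<beta>\<^sup>2 + 4 * \<beta> + 1) * eps) * D / (K * (1 - \<beta>) * lam)"
    using \<open>0 < D\<close> assms by (simp add: field_simps)
  ultimately show ?thesis by simp
qed

lemma lasso_estimation_bound:
  fixes K a1 \<beta> lam eps s u q nh :: real
  assumes "0 < K" and "1 \<le> a1" and "0 \<le> \<beta>" and "\<beta> < 1" and "0 < lam" and "0 \<le> eps"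
    and "0 \<le> s"
  defines "D \<equiv> K * a1 * lam + eps"
  assumes U: "u \<le> 2 * lam / D * s + 2 * D"
    and Q: "q \<le> (D\<^sup>2 + 4 * lam * s) / (2 * lam * (1 - \<beta>))"
    and nh: "nh \<le> (1 + a1) * u + (1 + \<beta>) / K * q"
  shows "nh \<le> (2 * K * a1 * (\<beta>\<^sup>2 + 3 * \<beta> + 3) * lam + 2 * (2 * \<beta>\<^sup>2 + 4 * \<beta> + 1) * eps)
        / (K * (1 - \<beta>) * D) * s
      + (K * a1 * (5 + 2 * \<beta>) * lam + (2 * \<beta>\<^sup>2 + 4 * \<beta> + 1) * eps) * D / (K * (1 - \<beta>) * lam)"
proof -
  have "0 < D" unfolding D_def using assms(1,2,5,6) by (simp add: add_pos_nonneg)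
  note nh
  also have "(1 + a1) * u + (1 + \<beta>) / K * q \<le> (1 + a1) * (2 * lam / D * s + 2 * D)
      + (1 + \<beta>) / K * ((D\<^sup>2 + 4 * lam * s) / (2 * lam * (1 - \<beta>)))"
    using U Q assms(1-3) by (intro add_mono mult_left_mono) auto
  also have "\<dots> = (2 * (1 + a1) * lam / D + 2 * (1 + \<beta>) / (K * (1 - \<beta>))) * s
      + (2 * (1 + a1) * D + (1 + \<beta>) * D\<^sup>2 / (2 * K * lam * (1 - \<beta>)))"
  proof -
    have "(1 + a1) * (2 * lam / D * s + 2 * D) + (1 + \<beta>) / K * ((D\<^sup>2 + 4 * lam * s) / (2 * lam * E))
        = (2 * (1 + a1) * lam / D + 2 * (1 + \<beta>) / (K * E)) * s
          + (2 * (1 + a1) * D + (1 + \<beta>) * D\<^sup>2 / (2 * K * lam * E))" if "0 < E" for E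
      using that \<open>0 < D\<close> \<open>0 < K\<close> \<open>0 < lam\<close> by (simp add: field_simps)
    from this[of "1 - \<beta>"] show ?thesis using \<open>\<beta> < 1\<close> by simp
  qed
  also have "\<dots> \<le> (2 * K * a1 * (\<beta>\<^sup>2 + 3 * \<beta> + 3) * lam + 2 * (2 * \<beta>\<^sup>2 + 4 * \<beta> + 1) * eps)
        / (K * (1 - \<beta>) * D) * s
      + (K * a1 * (5 + 2 * \<beta>) * lam + (2 * \<beta>\<^sup>2 + 4 * \<beta> + 1) * eps) * D / (K * (1 - \<beta>) * lam)"
    using lasso_error_l1_coefficient_le[OF assms(1-6)] lasso_error_constant_term_le[OF assms(1-6)]
      \<open>0 \<le> s\<close>
    unfolding D_def by (intro add_mono mult_right_mono) auto
  finally show ?thesis .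
qed

lemma lasso_error_bounds_of_estimates:
  fixes k :: nat and a1 a2 lam eps s u p q nh :: real
  assumes "0 < k" and "1 \<le> a1" and "0 \<le> a2" and "sqrt (real k) * a2 < 1"
    and "0 < lam" and "0 \<le> eps" and "0 \<le> s" and "0 \<le> q"
    and H1: "u\<^sup>2 \<le> 2 * lam * (sqrt (real k) * p - q + 2 * s) + 2 * eps * u"
    and H2: "p \<le> a1 * u + a2 * q"
    and H3: "nh \<le> u + p + q / sqrt (real k)"
  shows "let f = (\<lambda>t. real k * t\<^sup>2 + 3 * sqrt (real k) * t + 3);
             g = (\<lambda>t. 2 * real k * t\<^sup>2 + 4 * sqrt (real k) * t + 1);
             D = sqrt (real k) * a1 * lam + eps
         in u \<le> 2 * lam / D * s + 2 * D
          \<and> nh \<le> (2 * sqrt (real k) * a1 * f a2 * lam + 2 * g a2 * eps)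
                / (sqrt (real k) * (1 - sqrt (real k) * a2) * D) * s
              + (sqrt (real k) * a1 * (5 + 2 * sqrt (real k) * a2) * lam + g a2 * eps) * D
                / (sqrt (real k) * (1 - sqrt (real k) * a2) * lam)"
proof -
  define K where "K = sqrt (real k)"
  define \<beta> where "\<beta> = K * a2"
  define D where "D = K * a1 * lam + eps"
  have "0 < K" unfolding K_def using \<open>0 < k\<close> by simp
  have "0 \<le> \<beta>" "\<beta> < 1" unfolding \<beta>_def K_def using assms(3,4) by simp_all
  have "0 < D" unfolding D_def using \<open>0 < K\<close> assms(2,5,6) by (simp add: add_pos_nonneg)
  have "K * p \<le> K * a1 * u + \<beta> * q"
    using mult_left_mono[OF H2 less_imp_le[OF \<open>0 < K\<close>]] by (simp add: \<beta>_def algebra_simps)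
  from lasso_residual_quadratic[OF _ H1[folded K_def] this] \<open>0 < lam\<close>
  have quad: "u\<^sup>2 \<le> 2 * D * u - 2 * lam * (1 - \<beta>) * q + 4 * lam * s"
    unfolding D_def by simp
  have U: "u \<le> 2 * lam / D * s + 2 * D"
    using lasso_prediction_bound[OF \<open>0 < lam\<close> \<open>0 < D\<close> \<open>0 \<le> s\<close> _ \<open>0 \<le> q\<close> quad] \<open>\<beta> < 1\<close> by simp
  have Q: "q \<le> (D\<^sup>2 + 4 * lam * s) / (2 * lam * (1 - \<beta>))"
    by (rule lasso_off_support_bound[OF \<open>0 < lam\<close> \<open>\<beta> < 1\<close> quad])
  have "nh \<le> u + (a1 * u + a2 * q) + q / K"
    using H3 H2 unfolding K_def by linarith
  also have "\<dots> = (1 + a1) * u + (1 + \<beta>) / K * q"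
    using \<open>0 < K\<close> by (simp add: \<beta>_def field_simps)
  finally have NH: "nh \<le> (2 * K * a1 * (\<beta>\<^sup>2 + 3 * \<beta> + 3) * lam + 2 * (2 * \<beta>\<^sup>2 + 4 * \<beta> + 1) * eps)
        / (K * (1 - \<beta>) * D) * s
      + (K * a1 * (5 + 2 * \<beta>) * lam + (2 * \<beta>\<^sup>2 + 4 * \<beta> + 1) * eps) * D / (K * (1 - \<beta>) * lam)"
    using lasso_estimation_bound[OF \<open>0 < K\<close> assms(2) \<open>0 \<le> \<beta>\<close> \<open>\<beta> < 1\<close> assms(5-7)] U Q
    unfolding D_def by blast
  have "real k * a2\<^sup>2 = \<beta>\<^sup>2" unfolding \<beta>_def K_def by (simp add: power_mult_distrib)
  with U NH show ?thesis
    unfolding Let_def K_def[symmetric] D_def[symmetric] \<beta>_def[symmetric]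
    by (simp add: \<beta>_def mult.assoc)
qed

lemma coherence_threshold_constants:
  fixes k :: nat and \<mu> :: real
  assumes "2 \<le> k" and "0 \<le> \<mu>" and "\<mu> < 1 / (2 * real k - 1)"
  shows "0 < 1 - (real k - 1) * \<mu>"
    and "1 \<le> sqrt (1 + (real k - 1) * \<mu>) / (1 - (real k - 1) * \<mu>)"
    and "sqrt (real k) * (sqrt (real k) * \<mu> / (1 - (real k - 1) * \<mu>)) < 1"
    and "real k * \<mu> \<le> 1"
proof -
  have "(2 * real k - 1) * \<mu> < 1" using assms by (simp add: field_simps)
  moreover have "(real k - 1) * \<mu> \<le> (2 * real k - 1) * \<mu>"
    using assms by (intro mult_right_mono) auto
  ultimately have lt: "real k * \<mu> < 1 - (real k - 1) * \<mu>" by (simp add: algebra_simps)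
  moreover have "0 \<le> real k * \<mu>" "0 \<le> (real k - 1) * \<mu>" using assms by simp_all
  ultimately show c_pos: "0 < 1 - (real k - 1) * \<mu>" and "real k * \<mu> \<le> 1" by linarith+
  show "sqrt (real k) * (sqrt (real k) * \<mu> / (1 - (real k - 1) * \<mu>)) < 1"
    using lt c_pos by (simp add: mult.assoc[symmetric] divide_less_eq)
  have "1 - (real k - 1) * \<mu> \<le> 1" "1 \<le> sqrt (1 + (real k - 1) * \<mu>)" using assms by simp_all
  hence "1 - (real k - 1) * \<mu> \<le> sqrt (1 + (real k - 1) * \<mu>)" by linarith
  thus "1 \<le> sqrt (1 + (real k - 1) * \<mu>) / (1 - (real k - 1) * \<mu>)"
    using c_pos by (simp only: le_divide_eq mult_1_left) simp
qed

lemma lasso_cone_inequality: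
  fixes A :: "real ^ 'n ^ 'm"
  assumes "b = A *v x + z" and "norm z \<le> \<epsilon>" and "lam > 0"
    and "lasso_obj lam A b xs \<le> lasso_obj lam A b x" and best: "best_k_term k x xk"
  defines "T \<equiv> {i. xk $ i \<noteq> 0}"
  shows "(norm (A *v (xs - x)))\<^sup>2
    \<le> 2 * lam * (sqrt (real k) * norm (vec_restrict T (xs - x)) - l1 (vec_restrict (- T) (xs - x))
                  + 2 * l1 (x - xk))
      + 2 * \<epsilon> * norm (A *v (xs - x))"
proof -
  have "l0 (vec_restrict T (xs - x)) \<le> k"
    using l0_vec_restrict_le[of T "xs - x"] best unfolding best_k_term_def l0_def T_def by simp
  hence "l1 (vec_restrict T (xs - x)) \<le> sqrt (real k) * norm (vec_restrict T (xs - x))"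
    by (rule l1_le_sqrt_mul_norm)
  moreover have "l1 x - l1 xs \<le> l1 (vec_restrict T (xs - x)) - l1 (vec_restrict (- T) (xs - x))
      + 2 * l1 (x - xk)"
    using l1_diff_l1_add_le[of x "xs - x" T] l1_diff_best_k_term[OF best] unfolding T_def by simp
  ultimately have "2 * lam * (l1 x - l1 xs) \<le> 2 * lam * (sqrt (real k) * norm (vec_restrict T (xs - x))
      - l1 (vec_restrict (- T) (xs - x)) + 2 * l1 (x - xk))"
    using \<open>lam > 0\<close> by (intro mult_left_mono) auto
  with lasso_basic_inequality[OF assms(1-4)] show ?thesis by linarith
qed

lemma coherence_norm_le_split:
  fixes A :: "real ^ 'n ^ 'm"
  assumes unit: "\<And>i. norm (column i A) = 1"
    and coh: "\<And>i j. i \<noteq> j \<Longrightarrow> \<bar>column i A \<bullet> column j A\<bar> \<le> \<mu>"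
    and "0 \<le> \<mu>" and "real k * \<mu> \<le> 1" and "0 < k" and "card T \<le> k"
  shows "norm h \<le> norm (A *v h) + norm (vec_restrict T h) + l1 (vec_restrict (- T) h) / sqrt (real k)"
proof -
  have sqrt_le: "sqrt \<mu> * sqrt (real k) \<le> 1"
    using \<open>real k * \<mu> \<le> 1\<close> by (simp add: real_sqrt_mult[symmetric] mult.commute)
  have "l0 (vec_restrict T h) \<le> k" using l0_vec_restrict_le[of T h] \<open>card T \<le> k\<close> by linarith
  hence "sqrt \<mu> * l1 (vec_restrict T h) \<le> sqrt \<mu> * (sqrt (real k) * norm (vec_restrict T h))"
    using \<open>0 \<le> \<mu>\<close> by (intro mult_left_mono l1_le_sqrt_mul_norm) simp_all
  also have "\<dots> \<le> norm (vec_restrict T h)"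
    using mult_right_mono[OF sqrt_le norm_ge_zero[of "vec_restrict T h"]] by (simp add: mult.assoc)
  finally have on_T: "sqrt \<mu> * l1 (vec_restrict T h) \<le> norm (vec_restrict T h)" .
  have "sqrt \<mu> * sqrt (real k) * l1 (vec_restrict (- T) h) \<le> l1 (vec_restrict (- T) h)"
    using mult_right_mono[OF sqrt_le l1_nonneg] by simp
  hence off_T: "sqrt \<mu> * l1 (vec_restrict (- T) h) \<le> l1 (vec_restrict (- T) h) / sqrt (real k)"
    using \<open>0 < k\<close> by (simp add: field_simps)
  have "norm h \<le> norm (A *v h) + sqrt \<mu> * l1 h"
    using unit coh \<open>0 \<le> \<mu>\<close> by (rule coherence_norm_le)
  also have "\<dots> = norm (A *v h) + sqrt \<mu> * l1 (vec_restrict T h) + sqrt \<mu> * l1 (vec_restrict (- T) h)"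
    by (metis l1_vec_restrict_add_compl distrib_left add.assoc)
  finally show ?thesis using on_T off_T by linarith
qed

theorem theorem1:
  fixes A :: "real ^ 'n ^ 'm" and x xs xk :: "real ^ 'n" and z b :: "real ^ 'm"
    and k :: nat and \<epsilon> lam :: real
  assumes "k \<ge> 2"
    and "\<forall>i. norm (column i A) = 1"
    and "mutual_coherence A < 1 / (2 * real k - 1)"
    and "\<epsilon> \<ge> 0" and "norm z \<le> \<epsilon>" and "b = A *v x + z"
    and "lam > 0"
    and "\<forall>y. lasso_obj lam A b xs \<le> lasso_obj lam A b y"
    and "best_k_term k x xk"
  shows "let \<mu> = mutual_coherence A;
             \<alpha>1 = sqrt (1 + (real k - 1) * \<mu>) / (1 - (real k - 1) * \<mu>);
             \<alpha>2 = sqrt (real k) * \<mu> / (1 - (real k - 1) * \<mu>);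
             f = (\<lambda>t. real k * t\<^sup>2 + 3 * sqrt (real k) * t + 3);
             g = (\<lambda>t. 2 * real k * t\<^sup>2 + 4 * sqrt (real k) * t + 1);
             D = sqrt (real k) * \<alpha>1 * lam + \<epsilon>
         in norm (A *v (xs - x)) \<le> 2 * lam / D * l1 (x - xk) + 2 * D
          \<and> norm (xs - x) \<le>
              (2 * sqrt (real k) * \<alpha>1 * f \<alpha>2 * lam + 2 * g \<alpha>2 * \<epsilon>)
                / (sqrt (real k) * (1 - sqrt (real k) * \<alpha>2) * D) * l1 (x - xk)
              + (sqrt (real k) * \<alpha>1 * (5 + 2 * sqrt (real k) * \<alpha>2) * lam + g \<alpha>2 * \<epsilon>) * D
                / (sqrt (real k) * (1 - sqrt (real k) * \<alpha>2) * lam)"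
proof -
  define \<mu> where "\<mu> = mutual_coherence A"
  define T where "T = {i. xk $ i \<noteq> 0}"
  define h where "h = xs - x"
  have \<mu>: "0 \<le> \<mu>" "\<mu> < 1 / (2 * real k - 1)"
    using mutual_coherence_nonneg assms(3) unfolding \<mu>_def by auto
  have coh: "\<And>i j. i \<noteq> j \<Longrightarrow> \<bar>column i A \<bullet> column j A\<bar> \<le> \<mu>"
    unfolding \<mu>_def by (rule abs_inner_columns_le_mutual_coherence)
  have unit: "\<And>i. norm (column i A) = 1" using assms(2) by blast
  have k: "1 \<le> k" "0 < k" using assms(1) by simp_all
  have "card T \<le> k" using assms(9) unfolding best_k_term_def l0_def T_def by simp
  note thr = coherence_threshold_constants[OF assms(1) \<mu>]
  have H1: "(norm (A *v h))\<^sup>2 \<le> 2 * lam * (sqrt (real k) * norm (vec_restrict T h)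
      - l1 (vec_restrict (- T) h) + 2 * l1 (x - xk)) + 2 * \<epsilon> * norm (A *v h)"
    unfolding h_def T_def using assms(6,5,7,8,9) by (intro lasso_cone_inequality) auto
  have H2: "norm (vec_restrict T h)
      \<le> sqrt (1 + (real k - 1) * \<mu>) / (1 - (real k - 1) * \<mu>) * norm (A *v h)
        + sqrt (real k) * \<mu> / (1 - (real k - 1) * \<mu>) * l1 (vec_restrict (- T) h)"
    using unit coh \<mu>(1) k(1) \<open>card T \<le> k\<close> thr(1) by (intro coherence_norm_vec_restrict_le) auto
  have H3: "norm h \<le> norm (A *v h) + norm (vec_restrict T h) + l1 (vec_restrict (- T) h) / sqrt (real k)"
    using unit coh \<mu>(1) thr(4) k(2) \<open>card T \<le> k\<close> by (rule coherence_norm_le_split)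
  have "0 \<le> sqrt (real k) * \<mu> / (1 - (real k - 1) * \<mu>)" using \<mu>(1) thr(1) by simp
  from lasso_error_bounds_of_estimates[OF k(2) thr(2) this thr(3) assms(7,4)
      l1_nonneg l1_nonneg H1 H2 H3]
  show ?thesis unfolding Let_def \<mu>_def h_def by (simp only: Let_def)
qed

end
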